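(* Let $\mathcal B$ be a multiplicative family of entourages on a set $X$. For all integers $n\ge k>1$ and all $U_1,\dots,U_n\in\mathcal B$, $$\Pi(U_1,\dots,U_n)=\Pi(U_1,\dots,U_{k-1},\Pi(U_k,\dots,U_n)).$$
   Context: An entourage on $X$ is a subset of $X\times X$ containing the diagonal; $U\circ V=\{(x,z):\exists y\,((x,y)\in U,(y,z)\in V)\}$. A family $\mathcal B$ of entourages is multiplicative if $U\circ V\in\mathcal B$ whenever $U,V\in\mathcal B$. The balanced product is defined recursively: $\Pi(U_1)=U_1$ and, for $n>1$, $\Pi(U_1,\dots,U_n)=\Pi(U_2,\dots,U_n)\circ U_1\circ\Pi(U_2,\dots,U_n)$. *)

theory Defs
  imports Main
begin

definition entourage :: "'a set \<Rightarrow> 'a rel \<Rightarrow> bool" where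
  "entourage X U \<longleftrightarrow> U \<subseteq> X \<times> X \<and> Id_on X \<subseteq> U"

definition multiplicative :: "'a rel set \<Rightarrow> bool" where
  "multiplicative \<B> \<longleftrightarrow> (\<forall>U\<in>\<B>. \<forall>V\<in>\<B>. U O V \<in> \<B>)"

text \<open>Balanced product of a nonempty list [U1,...,Un]; the empty list is never used.\<close>
fun bprod :: "'a rel list \<Rightarrow> 'a rel" where
  "bprod [] = Id"
| "bprod [U] = U"
| "bprod (U # V # Us) = bprod (V # Us) O U O bprod (V # Us)"

end

theory Submission
  imports Defs
begin

lemma bprod_Cons: "bprod (U # Us) = (if Us = [] then U else bprod Us O U O bprod Us)"
  by (cases Us) auto

lemma bprod_append_bprod:
  assumes "Vs \<noteq> []"
  shows "bprod (Us @ Vs) = bprod (Us @ [bprod Vs])"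
  using assms by (induction Us) (auto simp: bprod_Cons)

text \<open>The identity is purely structural: it holds for arbitrary relations.\<close>

theorem lemma1p7:
  fixes X :: "'a set" and \<B> :: "'a rel set" and Us :: "'a rel list" and k :: nat
  assumes "\<forall>U\<in>\<B>. entourage X U"
    and "multiplicative \<B>"
    and "set Us \<subseteq> \<B>"
    and "1 < k" and "k \<le> length Us"
  shows "bprod Us = bprod (take (k - 1) Us @ [bprod (drop (k - 1) Us)])"
proof -
  have "drop (k - 1) Us \<noteq> []" using \<open>1 < k\<close> \<open>k \<le> length Us\<close> by simp
  then have "bprod (take (k - 1) Us @ drop (k - 1) Us)
      = bprod (take (k - 1) Us @ [bprod (drop (k - 1) Us)])"
    by (rule bprod_append_bprod)
  then show ?thesis by simp
qed

end
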